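(* Let $\mathcal{A}$ be a toric line arrangement in $\mathbb{T}^2$ consisting of exactly $3$ lines, with $f_0$ vertices and $f_2$ chambers, and suppose $f_0<f_2<2f_0$. Then $f_2-f_0$ divides $f_0$.
   Context: Let $\mathbb{T}^2=\mathbb{R}^2/\mathbb{Z}^2$ with quotient map $\pi:\mathbb{R}^2\to\mathbb{T}^2$. A toric line is the image $\pi(L)$ of a line $L=\{(x,y)\in\mathbb{R}^2: ax+by=c\}$ with $a,b\in\mathbb{Z}$ coprime and $c\in\mathbb{R}$; it is said to be of type $(a,b)$. A toric line arrangement is a finite set $\mathcal{A}=\{l_1,\dots,l_n\}$ of distinct toric lines which is essential, i.e. not all of its lines are of the same type (not all lines are parallel). The vertices of $\mathcal{A}$ are the points of $\mathbb{T}^2$ lying on at least two lines of $\mathcal{A}$; the chambers are the connected components of $\mathbb{T}^2\setminus\bigcup_i l_i$. We write $f_0$ and $f_2$ for the numbers of vertices and chambers. *)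

theory Defs
  imports "HOL-Analysis.Analysis"
begin

text \<open>The torus T^2 = R^2/Z^2, with points represented by their unique
representatives in [0,1) x [0,1); the quotient map is componentwise frac.\<close>

definition torus_map :: "real \<times> real \<Rightarrow> real \<times> real" where
  "torus_map p = (frac (fst p), frac (snd p))"

definition torus_space :: "(real \<times> real) set" where
  "torus_space = {0..<1} \<times> {0..<1}"

definition torus_top :: "(real \<times> real) topology" where
  "torus_top = topology (\<lambda>U. U \<subseteq> torus_space \<and> open (torus_map -` U))"

definition toric_line_of_type :: "(real \<times> real) set \<Rightarrow> int \<Rightarrow> int \<Rightarrow> bool" where
  "toric_line_of_type l a b \<longleftrightarrow> coprime a b \<and>
     (\<exists>c::real. l = torus_map ` {p. of_int a * fst p + of_int b * snd p = c})"

definition toric_line :: "(real \<times> real) set \<Rightarrow> bool" where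
  "toric_line l \<longleftrightarrow> (\<exists>a b. toric_line_of_type l a b)"

text \<open>A toric line arrangement: finite set of distinct toric lines, essential
(not all lines of the same type, i.e. some two lines are not parallel).\<close>
definition toric_arrangement :: "(real \<times> real) set set \<Rightarrow> bool" where
  "toric_arrangement A \<longleftrightarrow> finite A \<and> (\<forall>l\<in>A. toric_line l) \<and>
     (\<exists>l1\<in>A. \<exists>l2\<in>A. \<exists>a1 b1 a2 b2. toric_line_of_type l1 a1 b1 \<and>
        toric_line_of_type l2 a2 b2 \<and> a1 * b2 \<noteq> a2 * b1)"

definition arr_vertices :: "(real \<times> real) set set \<Rightarrow> (real \<times> real) set" where
  "arr_vertices A = {p \<in> torus_space. \<exists>l1\<in>A. \<exists>l2\<in>A. l1 \<noteq> l2 \<and> p \<in> l1 \<and> p \<in> l2}"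

definition arr_chambers :: "(real \<times> real) set set \<Rightarrow> (real \<times> real) set set" where
  "arr_chambers A = connected_components_of (subtopology torus_top (torus_space - \<Union>A))"

definition f0 :: "(real \<times> real) set set \<Rightarrow> nat" where
  "f0 A = card (arr_vertices A)"

definition f2 :: "(real \<times> real) set set \<Rightarrow> nat" where
  "f2 A = card (arr_chambers A)"

end

theory Submission
  imports Defs
begin

text \<open>
  Write the three lines as l_i = {L_i \<in> \<int>} with L_i(p) = a_i x + b_i y - c_i, l_1 and l_2
  not parallel. The affine map Lv = (L_1, L_2, L_3) from \<real>^2 to \<real>^3 is injective with image
  the plane {wd = gam}, where wd u = w \<bullet> u for the cross product w of the coefficient vectors.
  Translating p by \<int>^2 moves Lv p by the lattice Lam = Nl(\<int>^2) (Nl the linear part of Lv),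
  which lies in Kint = \<int>^3 \<inter> {wd = 0}. Hence vertices correspond to Lam-classes of points of
  the plane with two integral coordinates (vertex_points), and chambers to Lam-classes of the
  integer parts of points Lv p off the lines (chamber_labels), since the cells on which the
  integer part is constant are open and convex.

  Both sets are Kint-invariant, so f_0 = [Kint:Lam] x and f_2 = [Kint:Lam] s, where x and s
  count Kint-classes. With g = gcd (w_1, w_2, w_3) the level wd/g separates Kint-classes:
  chamber labels have levels in an open interval (alpha, alpha + nlevels), so
  s \<le> nlevels - [alpha \<in> \<int>]; the points on lines j and k give |w_i|/g distinct classes,
  and classes shared by two pairs of lines come from triple points, which form at most one
  class, existing only if alpha \<in> \<int>; so x \<ge> nlevels - 2 [alpha \<in> \<int>]. Thus s \<le> x + 1,
  f_0 < f_2 forces s = x + 1, and f_2 - f_0 = [Kint:Lam] divides f_0 = [Kint:Lam] x.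
\<close>

section \<open>Topology of the torus\<close>

lemma card_components_eq_card_values:
  assumes open_fibre: "\<And>x. x \<in> topspace X \<Longrightarrow> openin X {y \<in> topspace X. f y = f x}"
    and connected_fibre: "\<And>x. x \<in> topspace X \<Longrightarrow> connectedin X {y \<in> topspace X. f y = f x}"
  shows "card (connected_components_of X) = card (f ` topspace X)"
proof -
  define fibre where "fibre v = {y \<in> topspace X. f y = v}" for v
  have component: "connected_component_of_set X x = fibre (f x)" if x: "x \<in> topspace X" for x
  proof (rule connected_component_of_unique)
    show "x \<in> fibre (f x)" using x by (simp add: fibre_def)
    show "connectedin X (fibre (f x))" using connected_fibre x by (simp add: fibre_def)
    fix C assume C: "x \<in> C \<and> connectedin X C"
    have "topspace X - fibre (f x) = (\<Union>z\<in>topspace X - fibre (f x). fibre (f z))"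
      by (auto simp: fibre_def)
    moreover have "openin X (\<Union>z\<in>topspace X - fibre (f x). fibre (f z))"
      using open_fibre by (intro openin_Union) (auto simp: fibre_def)
    ultimately have "closedin X (fibre (f x))"
      by (simp add: closedin_def fibre_def)
    then have "C \<subseteq> fibre (f x) \<or> disjnt C (fibre (f x))"
      using connectedin_clopen_cases C open_fibre x unfolding fibre_def by blast
    then show "C \<subseteq> fibre (f x)" using C x by (auto simp: disjnt_def fibre_def)
  qed
  have "connected_components_of X = fibre ` f ` topspace X"
    unfolding connected_components_of_def using component by (auto simp: image_iff)
  moreover have "inj_on fibre (f ` topspace X)"
    by (auto simp: inj_on_def fibre_def)
  ultimately show ?thesis by (simp add: card_image)
qed

lemma istopology_torus: "istopology (\<lambda>U. U \<subseteq> torus_space \<and> open (torus_map -` U))"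
  unfolding istopology_def by (auto simp: vimage_Union intro!: open_Union)

lemma openin_torus: "openin torus_top U \<longleftrightarrow> U \<subseteq> torus_space \<and> open (torus_map -` U)"
  unfolding torus_top_def using istopology_torus by simp

lemma torus_map_in: "torus_map p \<in> torus_space"
  by (simp add: torus_map_def torus_space_def frac_lt_1)

lemma topspace_torus: "topspace torus_top = torus_space"
proof -
  have "torus_map -` torus_space = UNIV" using torus_map_in by auto
  then have "openin torus_top torus_space" unfolding openin_torus by auto
  then show ?thesis
    by (metis openin_subset openin_torus openin_topspace subset_antisym)
qed

lemma continuous_map_torus_map: "continuous_map euclidean torus_top torus_map"
  unfolding continuous_map_def topspace_torus
  by (auto simp: torus_map_in openin_torus vimage_def)

lemma torus_map_shift: "torus_map p = p + (- of_int \<lfloor>fst p\<rfloor>, - of_int \<lfloor>snd p\<rfloor>)"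
  by (simp add: torus_map_def frac_def prod_eq_iff)

section \<open>Cosets and indices in abelian groups\<close>

definition add_subgroup :: "'a::ab_group_add set \<Rightarrow> bool" where
  "add_subgroup H \<longleftrightarrow> 0 \<in> H \<and> (\<forall>x\<in>H. \<forall>y\<in>H. x - y \<in> H)"

definition add_coset :: "'a::ab_group_add set \<Rightarrow> 'a \<Rightarrow> 'a set" where
  "add_coset H y = (+) y ` H"

lemma add_subgroup_diff: "add_subgroup H \<Longrightarrow> x \<in> H \<Longrightarrow> y \<in> H \<Longrightarrow> x - y \<in> H"
  unfolding add_subgroup_def by blast

lemma add_subgroup_neg: "add_subgroup H \<Longrightarrow> x \<in> H \<Longrightarrow> - x \<in> H"
  unfolding add_subgroup_def by (metis diff_0)

lemma add_subgroup_add: "add_subgroup H \<Longrightarrow> x \<in> H \<Longrightarrow> y \<in> H \<Longrightarrow> x + y \<in> H"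
  by (metis add_subgroup_diff add_subgroup_neg diff_minus_eq_add)

lemma add_coset_self: "add_subgroup H \<Longrightarrow> y \<in> add_coset H y"
  unfolding add_coset_def add_subgroup_def by (metis add.right_neutral image_eqI)

lemma add_coset_eq_iff:
  assumes "add_subgroup H"
  shows "add_coset H x = add_coset H y \<longleftrightarrow> x - y \<in> H"
proof
  assume "add_coset H x = add_coset H y"
  then have "y \<in> add_coset H x" using add_coset_self[OF assms] by auto
  then obtain h where "h \<in> H" "y = x + h" unfolding add_coset_def by auto
  then show "x - y \<in> H" using add_subgroup_neg[OF assms] by auto
next
  have sub: "add_coset H u \<subseteq> add_coset H v" if "u - v \<in> H" for u v
  proof
    fix z assume "z \<in> add_coset H u"
    then obtain h where h: "h \<in> H" "z = u + h" unfolding add_coset_def by auto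
    then have "z = v + ((u - v) + h)" "(u - v) + h \<in> H"
      using add_subgroup_add[OF assms that h(1)] by simp_all
    then show "z \<in> add_coset H v" unfolding add_coset_def by blast
  qed
  assume "x - y \<in> H"
  moreover have "y - x \<in> H" using add_subgroup_neg[OF assms \<open>x - y \<in> H\<close>] by simp
  ultimately show "add_coset H x = add_coset H y" using sub by blast
qed

lemma add_coset_mem: "add_subgroup H \<Longrightarrow> z \<in> add_coset H y \<Longrightarrow> add_coset H z = add_coset H y"
  unfolding add_coset_eq_iff[of H z y] by (auto simp: add_coset_def)

text \<open>All cosets of L inside a coset of K look alike: they are translates of those in K.\<close>
lemma card_cosets_in_coset: "card (add_coset L ` add_coset K y) = card (add_coset L ` K)"
proof -
  have "add_coset L ` add_coset K y = image ((+) y) ` (add_coset L ` K)"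
    by (auto simp: add_coset_def image_image add.assoc)
  moreover have "inj_on (image ((+) y)) (add_coset L ` K)"
    by (rule inj_on_image) (simp add: inj_on_def)
  ultimately show ?thesis by (simp add: card_image)
qed

text \<open>Multiplicativity of indices for a K-invariant set Y and subgroups L \<subseteq> K:
  the L-classes of Y are the K-classes of Y, each split into [K:L] pieces.\<close>
lemma card_cosets_index:
  assumes L: "add_subgroup L" and K: "add_subgroup K" and "L \<subseteq> K"
    and Y: "\<And>y k. y \<in> Y \<Longrightarrow> k \<in> K \<Longrightarrow> y + k \<in> Y"
    and fin: "finite (add_coset L ` Y)"
  shows "card (add_coset L ` Y) = card (add_coset L ` K) * card (add_coset K ` Y)"
proof -
  define block where "block C = add_coset L ` C" for C
  have union: "add_coset L ` Y = \<Union>(block ` add_coset K ` Y)"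
  proof
    show "add_coset L ` Y \<subseteq> \<Union>(block ` add_coset K ` Y)"
      using add_coset_self[OF K] unfolding block_def by blast
    show "\<Union>(block ` add_coset K ` Y) \<subseteq> add_coset L ` Y"
      using Y unfolding block_def add_coset_def[of K] by auto
  qed
  have disjoint: "block C \<inter> block C' = {}"
    if C: "C \<in> add_coset K ` Y" "C' \<in> add_coset K ` Y" "C \<noteq> C'" for C C'
  proof (rule ccontr)
    assume "block C \<inter> block C' \<noteq> {}"
    then obtain c c' where c: "c \<in> C" "c' \<in> C'" "add_coset L c = add_coset L c'"
      unfolding block_def by auto
    then have "c - c' \<in> K" using add_coset_eq_iff[OF L] \<open>L \<subseteq> K\<close> by auto
    moreover have "C = add_coset K c" "C' = add_coset K c'"
      using C c add_coset_mem[OF K] by auto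
    ultimately show False using C(3) add_coset_eq_iff[OF K] by simp
  qed
  have "inj_on block (add_coset K ` Y)"
  proof (rule inj_onI)
    fix C C' assume C: "C \<in> add_coset K ` Y" "C' \<in> add_coset K ` Y" "block C = block C'"
    have "block C \<noteq> {}" using C(1) add_coset_self[OF K] unfolding block_def by auto
    then show "C = C'" using disjoint[OF C(1,2)] C(3) by auto
  qed
  moreover have "block ` add_coset K ` Y \<subseteq> Pow (add_coset L ` Y)"
    using union by auto
  ultimately have fin_K: "finite (add_coset K ` Y)"
    using fin by (metis finite_Pow_iff finite_imageD finite_subset)
  have "card (add_coset L ` Y) = (\<Sum>C\<in>add_coset K ` Y. card (block C))"
    unfolding union
    by (rule card_UN_disjoint[OF fin_K]) (use fin union disjoint in \<open>auto intro: finite_subset\<close>)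
  also have "\<dots> = (\<Sum>C\<in>add_coset K ` Y. card (add_coset L ` K))"
    by (rule sum.cong) (auto simp: block_def card_cosets_in_coset)
  also have "\<dots> = card (add_coset L ` K) * card (add_coset K ` Y)"
    by simp
  finally show ?thesis .
qed

lemma card_image_le_if_factors:
  assumes "finite (f ` A)" and "\<And>x y. x \<in> A \<Longrightarrow> y \<in> A \<Longrightarrow> f x = f y \<Longrightarrow> h x = h y"
  shows "card (h ` A) \<le> card (f ` A)"
proof -
  have "h ` A = (\<lambda>v. h (inv_into A f v)) ` f ` A"
    unfolding image_image
    by (rule image_cong[OF refl]) (metis assms(2) inv_into_into f_inv_into_f imageI)
  then show ?thesis using card_image_le[OF assms(1)] by simp
qed

lemma Ints_add_iff: "n \<in> \<int> \<Longrightarrow> (x + n \<in> \<int>) = (x \<in> (\<int>::real set))"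
  by (metis Ints_add Ints_diff add_diff_cancel_right')

lemma floor_add_Ints: "n \<in> \<int> \<Longrightarrow> (of_int \<lfloor>x + n\<rfloor> :: real) = of_int \<lfloor>x\<rfloor> + n"
  by (metis Ints_cases floor_add_int of_int_add)

lemma Ints_abs_less_1: "(q::real) \<in> \<int> \<Longrightarrow> \<bar>q\<bar> < 1 \<Longrightarrow> q = 0"
proof -
  assume "q \<in> \<int>" "\<bar>q\<bar> < 1"
  then obtain z where "q = of_int z" "\<bar>z\<bar> < 1" by (auto elim: Ints_cases)
  then show "q = 0" by simp
qed

lemma gcd3_bezout: "\<exists>e1 e2 e3. a * e1 + b * e2 + c * e3 = gcd a (gcd b (c::int))"
proof -
  obtain u v where uv: "u * b + v * c = gcd b c" using bezout_int by blast
  obtain x y where xy: "x * a + y * gcd b c = gcd a (gcd b c)" using bezout_int by blast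
  have "a * x + b * (y * u) + c * (y * v) = x * a + y * (u * b + v * c)"
    by (simp add: algebra_simps)
  also have "\<dots> = gcd a (gcd b c)" using xy uv by simp
  finally have "a * x + b * (y * u) + c * (y * v) = gcd a (gcd b c)" .
  then show ?thesis by blast
qed

lemma unit_interval_diff_int:
  "0 \<le> x \<Longrightarrow> x < 1 \<Longrightarrow> 0 \<le> y \<Longrightarrow> y < 1 \<Longrightarrow> x - y = of_int m \<Longrightarrow> x = (y::real)"
proof -
  assume h: "0 \<le> x" "x < 1" "0 \<le> y" "y < 1" "x - y = of_int m"
  then have "\<bar>x - y\<bar> < 1" by linarith
  moreover have "x - y \<in> \<int>" using h(5) by simp
  ultimately show "x = y" using Ints_abs_less_1[of "x - y"] by simp
qed

lemma floor_eq_not_Ints_iff: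
  assumes "(k::real) \<in> \<int>"
  shows "(of_int \<lfloor>x\<rfloor> = k \<and> x \<notin> \<int>) \<longleftrightarrow> (k < x \<and> x < k + 1)"
proof -
  obtain z where z: "k = of_int z" using assms by (auto elim: Ints_cases)
  have "x \<in> \<int> \<Longrightarrow> k < x \<Longrightarrow> x < k + 1 \<Longrightarrow> False"
  proof -
    assume "x \<in> \<int>" "k < x" "x < k + 1"
    then obtain j where "x = of_int j" "z < j" "j < z + 1" using z by (auto elim!: Ints_cases)
    then show False by linarith
  qed
  then show ?thesis using z by (auto simp: floor_eq_iff intro: le_neq_trans)
qed

lemma int_times_unit_bounds:
  fixes th :: real and w :: int
  assumes "0 < th" "th < 1"
  shows "of_int (min w 0) \<le> of_int w * th" "of_int w * th \<le> of_int (max w 0)"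
    and "w \<noteq> 0 \<Longrightarrow> of_int (min w 0) < of_int w * th \<and> of_int w * th < of_int (max w 0)"
proof -
  consider "w > 0" | "w < 0" | "w = 0" by linarith
  then have "(0 < w \<and> 0 < of_int w * th \<and> of_int w * th < of_int w)
      \<or> (w < 0 \<and> of_int w < of_int w * th \<and> of_int w * th < 0) \<or> w = 0"
  proof cases
    case 1
    then show ?thesis
      using assms mult_strict_left_mono[of th 1 "of_int w"] by simp
  next
    case 2
    then show ?thesis
      using assms mult_strict_left_mono_neg[of th 1 "of_int w"] by (simp add: mult_neg_pos)
  qed simp
  then show "of_int (min w 0) \<le> of_int w * th" "of_int w * th \<le> of_int (max w 0)"
    and "w \<noteq> 0 \<Longrightarrow> of_int (min w 0) < of_int w * th \<and> of_int w * th < of_int (max w 0)"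
    using assms by auto
qed

lemma card_Ints_in_interval:
  fixes a :: real and m :: int
  assumes "m \<ge> 1"
  shows "finite {n::int. a < of_int n \<and> of_int n < a + of_int m}"
    and "card {n::int. a < of_int n \<and> of_int n < a + of_int m} + (if a \<in> \<int> then 1 else 0) \<le> nat m"
proof -
  let ?N = "{n::int. a < of_int n \<and> of_int n < a + of_int m}"
  have sub: "?N \<subseteq> {\<lfloor>a\<rfloor> + 1 .. \<lfloor>a\<rfloor> + m}"
    by (auto simp: floor_less_iff le_floor_iff) linarith+
  then show "finite ?N" using finite_subset by blast
  show "card ?N + (if a \<in> \<int> then 1 else 0) \<le> nat m"
  proof (cases "a \<in> \<int>")
    case True
    then obtain z where z: "a = of_int z" by (auto elim: Ints_cases)
    have "?N \<subseteq> {z + 1 .. z + m - 1}" unfolding z by auto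
    then have "card ?N \<le> card {z + 1 .. z + m - 1}" by (intro card_mono) auto
    then show ?thesis using True assms by simp
  next
    case False
    have "card ?N \<le> card {\<lfloor>a\<rfloor> + 1 .. \<lfloor>a\<rfloor> + m}" using sub by (intro card_mono) auto
    then show ?thesis using False by simp
  qed
qed

lemma card_three_union_bound:
  assumes "finite A" "finite B" "finite C" "finite Z"
    "A \<inter> B \<subseteq> Z" "A \<inter> C \<subseteq> Z" "B \<inter> C \<subseteq> Z"
  shows "card A + card B + card C \<le> card (A \<union> B \<union> C) + 2 * card Z"
proof -
  have "card (A \<union> (B - Z) \<union> (C - Z)) = card A + card (B - Z) + card (C - Z)"
    using assms by (subst card_Un_disjoint; auto)+
  moreover have "card (A \<union> (B - Z) \<union> (C - Z)) \<le> card (A \<union> B \<union> C)"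
    using assms by (intro card_mono) auto
  moreover have split: "card X \<le> card (X - Z) + card Z" if "finite X" for X
  proof -
    have "card X \<le> card ((X - Z) \<union> Z)" using that assms(4) by (intro card_mono) auto
    then show ?thesis using card_Un_le[of "X - Z" Z] by linarith
  qed
  ultimately show ?thesis using split[OF assms(2)] split[OF assms(3)] by linarith
qed

lemma convex_affine_strip:
  fixes f :: "'a::real_vector \<Rightarrow> real"
  assumes "\<And>x y (u::real) v. u + v = 1 \<Longrightarrow> f (u *\<^sub>R x + v *\<^sub>R y) = u * f x + v * f y"
  shows "convex {p. lo < f p \<and> f p < hi}"
proof (rule convexI)
  fix x y and u v :: real
  assume h: "x \<in> {p. lo < f p \<and> f p < hi}" "y \<in> {p. lo < f p \<and> f p < hi}"
    "0 \<le> u" "0 \<le> v" "u + v = 1"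
  have "u * f x + v * f y < hi" using h by (intro convex_bound_lt) auto
  moreover have "u * (- f x) + v * (- f y) < - lo" using h by (intro convex_bound_lt) auto
  ultimately show "u *\<^sub>R x + v *\<^sub>R y \<in> {p. lo < f p \<and> f p < hi}" using assms h(5) by simp
qed

section \<open>Toric lines in coordinates\<close>

definition toric_line_eqn :: "int \<Rightarrow> int \<Rightarrow> real \<Rightarrow> (real \<times> real) set" where
  "toric_line_eqn a b c = {q \<in> torus_space. of_int a * fst q + of_int b * snd q - c \<in> \<int>}"

lemma affine_frac_Ints_iff:
  "(of_int a * frac x + of_int b * frac y - c \<in> \<int>) \<longleftrightarrow> (of_int a * x + of_int b * y - (c::real) \<in> \<int>)"
proof -
  have "of_int a * x + of_int b * y - c
      = (of_int a * frac x + of_int b * frac y - c) + of_int (a * \<lfloor>x\<rfloor> + b * \<lfloor>y\<rfloor>)"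
    by (simp add: frac_def algebra_simps)
  then show ?thesis using Ints_add_iff[of "of_int (a * \<lfloor>x\<rfloor> + b * \<lfloor>y\<rfloor>)"] by (metis Ints_of_int)
qed

lemma torus_map_in_line_iff:
  "torus_map p \<in> toric_line_eqn a b c \<longleftrightarrow> of_int a * fst p + of_int b * snd p - c \<in> \<int>"
  using torus_map_in[of p] affine_frac_Ints_iff
  by (simp add: toric_line_eqn_def torus_map_def)

text \<open>A toric line of type (a,b) is given by an equation a x + b y \<equiv> c mod \<int>; surjectivity onto
  the solutions uses coprimality of a and b (Bezout).\<close>
lemma toric_line_eqn_exists:
  assumes "toric_line_of_type l a b"
  shows "\<exists>c. l = toric_line_eqn a b c"
proof -
  obtain c where c: "l = torus_map ` {p. of_int a * fst p + of_int b * snd p = c}"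
    and cop: "coprime a b"
    using assms unfolding toric_line_of_type_def by blast
  have "l = toric_line_eqn a b c"
  proof
    show "l \<subseteq> toric_line_eqn a b c" using c torus_map_in_line_iff by auto
    show "toric_line_eqn a b c \<subseteq> l"
    proof
      fix q assume "q \<in> toric_line_eqn a b c"
      then have q: "q \<in> torus_space" "of_int a * fst q + of_int b * snd q - c \<in> \<int>"
        by (auto simp: toric_line_eqn_def)
      obtain n where n: "of_int a * fst q + of_int b * snd q - c = of_int n"
        using q(2) by (auto elim: Ints_cases)
      obtain u v where uv: "u * a + v * b = 1" using bezout_int[of a b] cop by auto
      define p where "p = (fst q - of_int (u * n), snd q - of_int (v * n))"
      have "of_int a * fst p + of_int b * snd p
          = of_int a * fst q + of_int b * snd q - of_int ((u * a + v * b) * n)"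
        unfolding p_def by (simp add: algebra_simps)
      then have "of_int a * fst p + of_int b * snd p = c" using uv n by simp
      moreover have "frac (x - of_int k) = frac x" for x :: real and k
        using frac_add_of_int_right[of x "- k"] by simp
      then have "torus_map p = q" using q(1)
        by (auto simp: p_def torus_map_def torus_space_def prod_eq_iff frac_eq simp del: of_int_mult)
      ultimately show "q \<in> l" using c by auto
    qed
  qed
  then show ?thesis by blast
qed

text \<open>Non-parallel lines are different: along the first line the second linear form takes
  every real value, in particular non-integral differences.\<close>
lemma toric_line_eqn_nonparallel:
  fixes a1 b1 a2 b2 :: int
  assumes "coprime a1 b1" "a1 * b2 \<noteq> a2 * b1"
  shows "toric_line_eqn a1 b1 c1 \<noteq> toric_line_eqn a2 b2 c2"
proof
  assume eq: "toric_line_eqn a1 b1 c1 = toric_line_eqn a2 b2 c2"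
  define d where "d = real_of_int a1 * of_int b2 - of_int a2 * of_int b1"
  have "d \<noteq> 0" unfolding d_def using assms(2) by (metis eq_iff_diff_eq_0 of_int_eq_iff of_int_mult)
  obtain u v where uv: "u * a1 + v * b1 = 1" using bezout_int[of a1 b1] assms(1) by auto
  define P where "P t = (c1 * of_int u + t * of_int b1, c1 * of_int v - t * of_int a1)" for t
  have "of_int a1 * fst (P t) + of_int b1 * snd (P t) = c1 * of_int (u * a1 + v * b1)" for t
    unfolding P_def by (simp add: algebra_simps)
  then have "torus_map (P t) \<in> toric_line_eqn a1 b1 c1" for t
    using uv torus_map_in_line_iff by simp
  then have on2: "of_int a2 * fst (P t) + of_int b2 * snd (P t) - c2 \<in> \<int>" for t
    using eq torus_map_in_line_iff by simp
  have "(of_int a2 * fst (P 0) + of_int b2 * snd (P 0) - c2)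
      - (of_int a2 * fst (P t) + of_int b2 * snd (P t) - c2) = t * d" for t
    unfolding P_def d_def by (simp add: algebra_simps)
  then have "(1 / (2 * d)) * d \<in> \<int>" using on2 by (metis Ints_diff)
  then have "(1/2::real) \<in> \<int>" using \<open>d \<noteq> 0\<close> by simp
  then obtain z where "(1/2::real) = of_int z" by (auto elim: Ints_cases)
  then have "real_of_int (2 * z) = 1" by simp
  then show False by presburger
qed

lemma arr_vertices_three:
  assumes "l1 \<noteq> l2" "l1 \<noteq> l3" "l2 \<noteq> l3"
  shows "arr_vertices {l1, l2, l3}
    = {q \<in> torus_space. (q \<in> l1 \<and> q \<in> l2) \<or> (q \<in> l1 \<and> q \<in> l3) \<or> (q \<in> l2 \<and> q \<in> l3)}"
  using assms unfolding arr_vertices_def by blast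

lemma three_line_arrangement_coordinates:
  assumes "toric_arrangement A" "card A = 3"
  obtains a1 b1 a2 b2 a3 b3 :: int and c1 c2 c3 :: real
  where "a1 * b2 - a2 * b1 \<noteq> 0"
    and "A = {toric_line_eqn a1 b1 c1, toric_line_eqn a2 b2 c2, toric_line_eqn a3 b3 c3}"
    and "toric_line_eqn a1 b1 c1 \<noteq> toric_line_eqn a2 b2 c2"
    and "toric_line_eqn a1 b1 c1 \<noteq> toric_line_eqn a3 b3 c3"
    and "toric_line_eqn a2 b2 c2 \<noteq> toric_line_eqn a3 b3 c3"
proof -
  obtain l1 l2 a1 b1 a2 b2 where l12: "l1 \<in> A" "l2 \<in> A" "toric_line_of_type l1 a1 b1"
      "toric_line_of_type l2 a2 b2" "a1 * b2 \<noteq> a2 * b1"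
    using assms(1) unfolding toric_arrangement_def by blast
  obtain c1 c2 where c: "l1 = toric_line_eqn a1 b1 c1" "l2 = toric_line_eqn a2 b2 c2"
    using toric_line_eqn_exists[OF l12(3)] toric_line_eqn_exists[OF l12(4)] by blast
  have "l1 \<noteq> l2" unfolding c using l12(3,5) toric_line_eqn_nonparallel
    by (auto simp: toric_line_of_type_def)
  then have "card (A - {l1, l2}) = 1" using assms(2) l12(1,2) by (simp add: card_Diff_subset)
  then obtain l3 where l3: "A - {l1, l2} = {l3}" by (rule card_1_singletonE)
  then have "toric_line l3" using assms(1) unfolding toric_arrangement_def by blast
  then obtain a3 b3 c3 where c3: "l3 = toric_line_eqn a3 b3 c3"
    unfolding toric_line_def using toric_line_eqn_exists by blast
  show ?thesis
  proof
    show "a1 * b2 - a2 * b1 \<noteq> 0" using l12(5) by simp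
    show "A = {toric_line_eqn a1 b1 c1, toric_line_eqn a2 b2 c2, toric_line_eqn a3 b3 c3}"
      using l3 l12(1,2) c c3 by auto
  qed (use l3 c c3 \<open>l1 \<noteq> l2\<close> in auto)
qed

definition Z3 :: "(real \<times> real \<times> real) set" where
  "Z3 = {u. fst u \<in> \<int> \<and> fst (snd u) \<in> \<int> \<and> snd (snd u) \<in> \<int>}"

definition floor3 :: "real \<times> real \<times> real \<Rightarrow> real \<times> real \<times> real" where
  "floor3 u = (of_int \<lfloor>fst u\<rfloor>, of_int \<lfloor>fst (snd u)\<rfloor>, of_int \<lfloor>snd (snd u)\<rfloor>)"

lemma Z3_diff: "u \<in> Z3 \<Longrightarrow> v \<in> Z3 \<Longrightarrow> u - v \<in> Z3"
  by (auto simp: Z3_def)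

lemma floor3_Z3: "floor3 u \<in> Z3"
  by (simp add: floor3_def Z3_def)

lemma floor3_add: "k \<in> Z3 \<Longrightarrow> floor3 (u + k) = floor3 u + k"
  by (simp add: floor3_def Z3_def floor_add_Ints prod_eq_iff)

text \<open>The vector w = (w_1, w_2, w_3) is
  normal to the image plane of Lv, which is {wd = gam}.\<close>
locale three_lines =
  fixes a1 b1 a2 b2 a3 b3 :: int and c1 c2 c3 :: real
  assumes nonparallel: "a1 * b2 - a2 * b1 \<noteq> 0"
begin

definition L1 :: "real \<times> real \<Rightarrow> real" where "L1 p = of_int a1 * fst p + of_int b1 * snd p - c1"
definition L2 :: "real \<times> real \<Rightarrow> real" where "L2 p = of_int a2 * fst p + of_int b2 * snd p - c2"
definition L3 :: "real \<times> real \<Rightarrow> real" where "L3 p = of_int a3 * fst p + of_int b3 * snd p - c3"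
definition Lv :: "real \<times> real \<Rightarrow> real \<times> real \<times> real" where "Lv p = (L1 p, L2 p, L3 p)"
definition Nl :: "real \<times> real \<Rightarrow> real \<times> real \<times> real" where
  "Nl v = (of_int a1 * fst v + of_int b1 * snd v, of_int a2 * fst v + of_int b2 * snd v,
           of_int a3 * fst v + of_int b3 * snd v)"
definition w1 :: int where "w1 = a2 * b3 - a3 * b2"
definition w2 :: int where "w2 = a3 * b1 - a1 * b3"
definition w3 :: int where "w3 = a1 * b2 - a2 * b1"
definition wd :: "real \<times> real \<times> real \<Rightarrow> real" where
  "wd u = of_int w1 * fst u + of_int w2 * fst (snd u) + of_int w3 * snd (snd u)"
definition gam :: real where "gam = - (of_int w1 * c1 + of_int w2 * c2 + of_int w3 * c3)"
definition Lam :: "(real \<times> real \<times> real) set" where "Lam = {Nl (of_int m, of_int n) | m n. True}"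
definition Kint :: "(real \<times> real \<times> real) set" where "Kint = {u \<in> Z3. wd u = 0}"

lemma w3_nonzero: "w3 \<noteq> 0"
  using nonparallel by (simp add: w3_def)

lemma Lv_add: "Lv (p + v) = Lv p + Nl v"
  by (simp add: Lv_def Nl_def L1_def L2_def L3_def algebra_simps)

lemma L_add:
  "L1 (p + v) = L1 p + fst (Nl v)" "L2 (p + v) = L2 p + fst (snd (Nl v))"
  "L3 (p + v) = L3 p + snd (snd (Nl v))"
  using Lv_add[of p v] by (simp_all add: Lv_def prod_eq_iff)

lemma wd_Lv: "wd (Lv p) = gam"
  by (simp add: wd_def Lv_def L1_def L2_def L3_def gam_def w1_def w2_def w3_def algebra_simps)

lemma wd_Nl: "wd (Nl v) = 0"
  by (simp add: wd_def Nl_def w1_def w2_def w3_def algebra_simps)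

lemma wd_add: "wd (u + v) = wd u + wd v"
  by (simp add: wd_def algebra_simps)

lemma wd_diff: "wd (u - v) = wd u - wd v"
  by (simp add: wd_def algebra_simps)

text \<open>The image of Lv is the whole plane {wd = gam}: solve the first two coordinates by
  Cramer's rule, the third then follows from the plane equation.\<close>
lemma Lv_onto_plane:
  assumes "wd u = gam"
  shows "\<exists>p. Lv p = u"
proof -
  obtain u1 u2 u3 where u: "u = (u1, u2, u3)" by (cases u) auto
  define d where "d = real_of_int w3"
  have d: "d \<noteq> 0" using w3_nonzero by (simp add: d_def)
  define p where "p = ((of_int b2 * (u1 + c1) - of_int b1 * (u2 + c2)) / d,
                       (of_int a1 * (u2 + c2) - of_int a2 * (u1 + c1)) / d)"
  have dp: "d * fst p = of_int b2 * (u1 + c1) - of_int b1 * (u2 + c2)"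
           "d * snd p = of_int a1 * (u2 + c2) - of_int a2 * (u1 + c1)"
    using d by (simp_all add: p_def)
  have d_eq: "d = of_int a1 * of_int b2 - of_int a2 * of_int b1" by (simp add: d_def w3_def)
  have "d * L1 p = of_int a1 * (d * fst p) + of_int b1 * (d * snd p) - d * c1"
    by (simp add: L1_def algebra_simps)
  also have "\<dots> = d * u1" unfolding dp unfolding d_eq by (simp add: algebra_simps)
  finally have e1: "L1 p = u1" using d by simp
  have "d * L2 p = of_int a2 * (d * fst p) + of_int b2 * (d * snd p) - d * c2"
    by (simp add: L2_def algebra_simps)
  also have "\<dots> = d * u2" unfolding dp unfolding d_eq by (simp add: algebra_simps)
  finally have e2: "L2 p = u2" using d by simp
  have "wd (Lv p) = wd u" using assms wd_Lv by simp
  then have "d * L3 p = d * u3" using e1 e2 unfolding wd_def Lv_def u d_def by simp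
  then have "Lv p = u" using e1 e2 u d by (simp add: Lv_def)
  then show ?thesis by blast
qed

lemma Nl_onto_plane:
  assumes "wd u = 0"
  shows "\<exists>v. Nl v = u"
proof -
  obtain p where p: "Lv p = u + Lv 0"
    using Lv_onto_plane[of "u + Lv 0"] assms wd_add wd_Lv by auto
  have "Lv (0 + p) = Lv 0 + Nl p" by (rule Lv_add)
  then have "Nl p = u" using p by (simp add: algebra_simps)
  then show ?thesis by blast
qed

lemma Nl_diff: "Nl u - Nl v = Nl (u - v)"
  by (simp add: Nl_def algebra_simps)

text \<open>Nl is injective because the first two coordinates already determine the point.\<close>
lemma Nl_inj: "Nl u = Nl v \<Longrightarrow> u = v"
proof -
  assume "Nl u = Nl v"
  then have "Nl (u - v) = 0" using Nl_diff by (metis right_minus_eq)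
  moreover obtain x y where xy: "u - v = (x, y)" by fastforce
  ultimately have h: "of_int a1 * x + of_int b1 * y = 0" "of_int a2 * x + of_int b2 * y = (0::real)"
    by (auto simp: Nl_def prod_eq_iff)
  define d where "d = real_of_int a1 * of_int b2 - of_int a2 * of_int b1"
  have "d \<noteq> 0"
    unfolding d_def using nonparallel by (metis of_int_eq_0_iff of_int_diff of_int_mult)
  have "d * x = of_int b2 * (of_int a1 * x + of_int b1 * y) - of_int b1 * (of_int a2 * x + of_int b2 * y)"
    by (simp add: d_def algebra_simps)
  then have "x = 0" using h \<open>d \<noteq> 0\<close> by simp
  have "d * y = of_int a1 * (of_int a2 * x + of_int b2 * y) - of_int a2 * (of_int a1 * x + of_int b1 * y)"
    by (simp add: d_def algebra_simps)
  then have "y = 0" using h \<open>d \<noteq> 0\<close> by simp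
  then show "u = v" using xy \<open>x = 0\<close> by (simp add: zero_prod_def[symmetric])
qed

lemma Nl_int: "Nl (of_int m, of_int n) \<in> Lam" "Nl (of_int m, of_int n) \<in> Z3"
  unfolding Lam_def by (auto simp: Nl_def Z3_def)

lemma add_subgroup_Kint: "add_subgroup Kint"
  unfolding add_subgroup_def Kint_def
  by (auto intro: Z3_diff simp: wd_diff) (simp_all add: Z3_def wd_def)

lemma add_subgroup_Lam: "add_subgroup Lam"
  unfolding add_subgroup_def
proof (intro conjI ballI)
  show "0 \<in> Lam" using Nl_int(1)[of 0 0] by (simp add: Nl_def zero_prod_def)
  fix x y assume "x \<in> Lam" "y \<in> Lam"
  then obtain m n m' n' where "x = Nl (of_int m, of_int n)" "y = Nl (of_int m', of_int n')"
    unfolding Lam_def by auto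
  then have "x - y = Nl (of_int (m - m'), of_int (n - n'))" by (simp add: Nl_diff)
  then show "x - y \<in> Lam" unfolding Lam_def by blast
qed

lemma Lam_subset_Kint: "Lam \<subseteq> Kint"
  unfolding Lam_def Kint_def using wd_Nl by (auto simp: Z3_def Nl_def)

lemma Kint_Nl: "k \<in> Kint \<Longrightarrow> \<exists>v. Nl v = k"
  using Nl_onto_plane unfolding Kint_def by auto

lemma Kint_Z3: "k \<in> Kint \<Longrightarrow> k \<in> Z3"
  unfolding Kint_def by auto

lemma L_Ints_shift:
  assumes "Nl v \<in> Z3"
  shows "(L1 (p + v) \<in> \<int>) = (L1 p \<in> \<int>)" "(L2 (p + v) \<in> \<int>) = (L2 p \<in> \<int>)"
    "(L3 (p + v) \<in> \<int>) = (L3 p \<in> \<int>)"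
  using assms unfolding L_add Z3_def by (simp_all add: Ints_add_iff)

lemma torus_map_as_shift:
  obtains v where "torus_map p = p + v" "Nl v \<in> Lam" "Nl v \<in> Z3"
proof
  let ?v = "(of_int (- \<lfloor>fst p\<rfloor>), of_int (- \<lfloor>snd p\<rfloor>)) :: real \<times> real"
  show "torus_map p = p + ?v" using torus_map_shift[of p] by (simp only: of_int_minus)
  show "Nl ?v \<in> Lam" "Nl ?v \<in> Z3" by (rule Nl_int)+
qed

section \<open>Vertices and chambers as classes in \<real>^3\<close>

text \<open>Points off all three lines, the integer parts of their images (labels of the cells
  of the complement), and the images of the points lying on two of the lines.\<close>
definition off_lines :: "(real \<times> real) set" where
  "off_lines = {p. L1 p \<notin> \<int> \<and> L2 p \<notin> \<int> \<and> L3 p \<notin> \<int>}"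
definition chamber_labels :: "(real \<times> real \<times> real) set" where
  "chamber_labels = floor3 ` Lv ` off_lines"
definition X1 :: "(real \<times> real \<times> real) set" where "X1 = Lv ` {p. L2 p \<in> \<int> \<and> L3 p \<in> \<int>}"
definition X2 :: "(real \<times> real \<times> real) set" where "X2 = Lv ` {p. L1 p \<in> \<int> \<and> L3 p \<in> \<int>}"
definition X3 :: "(real \<times> real \<times> real) set" where "X3 = Lv ` {p. L1 p \<in> \<int> \<and> L2 p \<in> \<int>}"
definition vertex_points :: "(real \<times> real \<times> real) set" where
  "vertex_points = X1 \<union> X2 \<union> X3"

lemma Kint_shift: "k \<in> Kint \<Longrightarrow> \<exists>v. (\<forall>p. Lv (p + v) = Lv p + k) \<and> Nl v \<in> Z3"
  by (metis Kint_Nl Kint_Z3 Lv_add)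

lemma chamber_labels_invariant:
  assumes "y \<in> chamber_labels" "k \<in> Kint"
  shows "y + k \<in> chamber_labels"
proof -
  obtain p where p: "p \<in> off_lines" "y = floor3 (Lv p)"
    using assms(1) unfolding chamber_labels_def by auto
  obtain v where v: "\<And>p. Lv (p + v) = Lv p + k" "Nl v \<in> Z3" using Kint_shift[OF assms(2)] by blast
  have "p + v \<in> off_lines" using p(1) L_Ints_shift[OF v(2)] unfolding off_lines_def by simp
  moreover have "floor3 (Lv (p + v)) = y + k"
    using v(1) p(2) floor3_add[OF Kint_Z3[OF assms(2)]] by simp
  ultimately show ?thesis unfolding chamber_labels_def by (metis image_eqI)
qed

lemma vertex_points_invariant:
  assumes "k \<in> Kint"
  shows "y \<in> X1 \<Longrightarrow> y + k \<in> X1" "y \<in> X2 \<Longrightarrow> y + k \<in> X2" "y \<in> X3 \<Longrightarrow> y + k \<in> X3"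
    and "y \<in> vertex_points \<Longrightarrow> y + k \<in> vertex_points"
proof -
  obtain v where v: "\<And>p. Lv (p + v) = Lv p + k" "Nl v \<in> Z3" using Kint_shift[OF assms] by blast
  note shift = L_Ints_shift[OF v(2)] v(1)[symmetric]
  show X1: "y \<in> X1 \<Longrightarrow> y + k \<in> X1"
    unfolding X1_def using shift by (auto intro!: image_eqI[of _ _ "_ + v"])
  show X2: "y \<in> X2 \<Longrightarrow> y + k \<in> X2"
    unfolding X2_def using shift by (auto intro!: image_eqI[of _ _ "_ + v"])
  show X3: "y \<in> X3 \<Longrightarrow> y + k \<in> X3"
    unfolding X3_def using shift by (auto intro!: image_eqI[of _ _ "_ + v"])
  show "y \<in> vertex_points \<Longrightarrow> y + k \<in> vertex_points"
    unfolding vertex_points_def using X1 X2 X3 by blast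
qed

lemma X_integral_coords:
  "x \<in> X1 \<Longrightarrow> fst (snd x) \<in> \<int> \<and> snd (snd x) \<in> \<int>"
  "x \<in> X2 \<Longrightarrow> fst x \<in> \<int> \<and> snd (snd x) \<in> \<int>"
  "x \<in> X3 \<Longrightarrow> fst x \<in> \<int> \<and> fst (snd x) \<in> \<int>"
  by (auto simp: X1_def X2_def X3_def Lv_def)

lemma plane_point_in_X:
  assumes "wd u = gam"
  shows "fst (snd u) \<in> \<int> \<Longrightarrow> snd (snd u) \<in> \<int> \<Longrightarrow> u \<in> X1"
    "fst u \<in> \<int> \<Longrightarrow> snd (snd u) \<in> \<int> \<Longrightarrow> u \<in> X2"
    "fst u \<in> \<int> \<Longrightarrow> fst (snd u) \<in> \<int> \<Longrightarrow> u \<in> X3"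
proof -
  obtain p where p: "Lv p = u" using Lv_onto_plane[OF assms] by blast
  then have "L1 p = fst u" "L2 p = fst (snd u)" "L3 p = snd (snd u)" by (auto simp: Lv_def)
  then show "fst (snd u) \<in> \<int> \<Longrightarrow> snd (snd u) \<in> \<int> \<Longrightarrow> u \<in> X1"
    "fst u \<in> \<int> \<Longrightarrow> snd (snd u) \<in> \<int> \<Longrightarrow> u \<in> X2"
    "fst u \<in> \<int> \<Longrightarrow> fst (snd u) \<in> \<int> \<Longrightarrow> u \<in> X3"
    unfolding X1_def X2_def X3_def using p by auto
qed

lemma vertex_points_plane: "u \<in> vertex_points \<Longrightarrow> wd u = gam"
  unfolding vertex_points_def X1_def X2_def X3_def using wd_Lv by auto

lemma same_class_integral_coords:
  assumes "add_coset Kint x = add_coset Kint y"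
  shows "fst x \<in> \<int> \<longleftrightarrow> fst y \<in> \<int>" "fst (snd x) \<in> \<int> \<longleftrightarrow> fst (snd y) \<in> \<int>"
    "snd (snd x) \<in> \<int> \<longleftrightarrow> snd (snd y) \<in> \<int>"
proof -
  have "x - y \<in> Z3" using assms add_coset_eq_iff[OF add_subgroup_Kint] Kint_Z3 by blast
  then have d: "fst (x - y) \<in> \<int>" "fst (snd (x - y)) \<in> \<int>" "snd (snd (x - y)) \<in> \<int>"
    by (simp_all add: Z3_def)
  show "fst x \<in> \<int> \<longleftrightarrow> fst y \<in> \<int>"
    using Ints_add_iff[OF d(1), of "fst y"] by simp
  show "fst (snd x) \<in> \<int> \<longleftrightarrow> fst (snd y) \<in> \<int>"
    using Ints_add_iff[OF d(2), of "fst (snd y)"] by simp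
  show "snd (snd x) \<in> \<int> \<longleftrightarrow> snd (snd y) \<in> \<int>"
    using Ints_add_iff[OF d(3), of "snd (snd y)"] by simp
qed

section \<open>Counting Kint-classes by levels\<close>

text \<open>The value wd/g of an integral point is an integer, its level. The chamber labels have
  levels strictly between alpha and alpha + nlevels.\<close>
definition g :: int where "g = gcd w1 (gcd w2 w3)"
definition pos :: int where "pos = max w1 0 + max w2 0 + max w3 0"
definition neg :: int where "neg = min w1 0 + min w2 0 + min w3 0"
definition nlevels :: int where "nlevels = (\<bar>w1\<bar> + \<bar>w2\<bar> + \<bar>w3\<bar>) div g"
definition alpha :: real where "alpha = (gam - of_int pos) / of_int g"

lemma g_pos: "g > 0"
  using w3_nonzero by (simp add: g_def)

lemma g_dvd: "g dvd w1" "g dvd w2" "g dvd w3"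
  by (simp_all add: g_def) (meson dvd_trans gcd_dvd1 gcd_dvd2)+

lemma pos_minus_neg: "pos - neg = g * nlevels"
proof -
  have "g dvd \<bar>w1\<bar> + \<bar>w2\<bar> + \<bar>w3\<bar>" using g_dvd by simp
  moreover have "pos - neg = \<bar>w1\<bar> + \<bar>w2\<bar> + \<bar>w3\<bar>" unfolding pos_def neg_def by auto
  ultimately show ?thesis unfolding nlevels_def by simp
qed

lemma nlevels_ge_1: "nlevels \<ge> 1"
proof -
  have "pos - neg > 0" unfolding pos_def neg_def using w3_nonzero by auto
  then show ?thesis using pos_minus_neg g_pos by (simp add: zero_less_mult_iff)
qed

lemma nlevels_split: "nat nlevels = nat (\<bar>w1\<bar> div g) + nat (\<bar>w2\<bar> div g) + nat (\<bar>w3\<bar> div g)"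
proof -
  have "nlevels = \<bar>w1\<bar> div g + \<bar>w2\<bar> div g + \<bar>w3\<bar> div g"
    unfolding nlevels_def using g_dvd by simp
  moreover have "\<bar>w1\<bar> div g \<ge> 0" "\<bar>w2\<bar> div g \<ge> 0" "\<bar>w3\<bar> div g \<ge> 0"
    using g_pos by (simp_all add: pos_imp_zdiv_nonneg_iff)
  ultimately show ?thesis by (simp add: nat_add_distrib)
qed

text \<open>For a point off the lines, gam = wd(floor3 (Lv p)) + \<theta> where \<theta> collects the
  fractional parts; \<theta> lies strictly between neg and pos, since frac (L3 p) > 0 and w3 \<noteq> 0.\<close>
lemma chamber_label_level:
  assumes "s \<in> chamber_labels"
  shows "\<exists>n::int. wd s = of_int g * of_int n \<and> alpha < of_int n \<and> of_int n < alpha + of_int nlevels"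
proof -
  obtain p where p: "p \<in> off_lines" "s = floor3 (Lv p)"
    using assms unfolding chamber_labels_def by auto
  define z where "z = w1 * \<lfloor>L1 p\<rfloor> + w2 * \<lfloor>L2 p\<rfloor> + w3 * \<lfloor>L3 p\<rfloor>"
  have ws: "wd s = of_int z" unfolding p(2) z_def wd_def floor3_def Lv_def by simp
  have "g dvd z" unfolding z_def using g_dvd by simp
  then obtain n where n: "z = g * n" by (auto elim: dvdE)
  define th where "th = of_int w1 * frac (L1 p) + of_int w2 * frac (L2 p) + of_int w3 * frac (L3 p)"
  have gam_eq: "gam = of_int z + th"
    using wd_Lv[of p] unfolding z_def th_def wd_def Lv_def frac_def by (simp add: algebra_simps)
  have fr: "0 < frac (L1 p)" "0 < frac (L2 p)" "0 < frac (L3 p)"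
    using p(1) by (auto simp: off_lines_def)
  have "of_int (min w1 0) \<le> of_int w1 * frac (L1 p)" "of_int w1 * frac (L1 p) \<le> of_int (max w1 0)"
    "of_int (min w2 0) \<le> of_int w2 * frac (L2 p)" "of_int w2 * frac (L2 p) \<le> of_int (max w2 0)"
    using int_times_unit_bounds[OF fr(1) frac_lt_1] int_times_unit_bounds[OF fr(2) frac_lt_1]
    by auto
  moreover have "of_int (min w3 0) < of_int w3 * frac (L3 p)" "of_int w3 * frac (L3 p) < of_int (max w3 0)"
    using int_times_unit_bounds(3)[OF fr(3) frac_lt_1 w3_nonzero] by auto
  ultimately have th: "of_int neg < th" "th < of_int pos"
    unfolding th_def neg_def pos_def by simp_all
  have gp: "real_of_int g > 0" using g_pos by simp
  have g_alpha: "of_int g * alpha = gam - of_int pos" using gp unfolding alpha_def by simp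
  have g_n: "of_int g * of_int n = gam - th" using gam_eq n by simp
  have "of_int g * alpha < of_int g * of_int n" using g_alpha g_n th by simp
  then have "alpha < of_int n" using gp by simp
  moreover have "of_int g * (alpha + of_int nlevels) = gam - of_int neg"
    using g_alpha pos_minus_neg by (simp add: algebra_simps flip: of_int_mult)
  then have "of_int n < alpha + of_int nlevels"
    using g_n th gp by (metis mult_less_cancel_left_pos diff_strict_left_mono)
  ultimately show ?thesis using ws n by (intro exI[of _ n]) simp
qed

text \<open>Chamber labels of the same level are Kint-equivalent, so there are at most
  nlevels Kint-classes, one fewer when alpha (hence the interval end) is an integer.\<close>
lemma chamber_classes_bound:
  "card (add_coset Kint ` chamber_labels) + (if alpha \<in> \<int> then 1 else 0) \<le> nat nlevels"
proof -
  define N where "N = {n::int. alpha < of_int n \<and> of_int n < alpha + of_int nlevels}"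
  define level where "level s = wd s / of_int g" for s
  have gp: "real_of_int g > 0" using g_pos by simp
  have sub: "level ` chamber_labels \<subseteq> of_int ` N"
  proof
    fix v assume "v \<in> level ` chamber_labels"
    then obtain s where s: "s \<in> chamber_labels" "v = level s" by auto
    obtain n where "wd s = of_int g * of_int n" "alpha < of_int n" "of_int n < alpha + of_int nlevels"
      using chamber_label_level[OF s(1)] by blast
    then show "v \<in> of_int ` N" using s gp unfolding level_def N_def by auto
  qed
  have fin_N: "finite N" unfolding N_def by (rule card_Ints_in_interval(1)[OF nlevels_ge_1])
  then have fin: "finite (level ` chamber_labels)" using sub finite_subset by blast
  have "card (add_coset Kint ` chamber_labels) \<le> card (level ` chamber_labels)"
  proof (rule card_image_le_if_factors[OF fin])
    fix s s' assume s: "s \<in> chamber_labels" "s' \<in> chamber_labels" "level s = level s'"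
    have "s \<in> Z3" "s' \<in> Z3" using s(1,2) floor3_Z3 unfolding chamber_labels_def by auto
    moreover have "wd (s - s') = 0" using s(3) gp by (simp add: level_def wd_diff)
    ultimately have "s - s' \<in> Kint" unfolding Kint_def by (simp add: Z3_diff)
    then show "add_coset Kint s = add_coset Kint s'"
      using add_coset_eq_iff[OF add_subgroup_Kint] by simp
  qed
  also have "\<dots> \<le> card (of_int ` N :: real set)" using sub fin_N by (intro card_mono) auto
  also have "\<dots> \<le> card N" by (rule card_image_le[OF fin_N])
  finally show ?thesis using card_Ints_in_interval(2)[OF nlevels_ge_1, of alpha] unfolding N_def
    by simp
qed

lemma classes_lower_bound:
  fixes pr :: "real \<times> real \<times> real \<Rightarrow> real" and F :: "int \<Rightarrow> real \<times> real \<times> real"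
    and h :: "int \<Rightarrow> int" and w :: int
  assumes FY: "\<And>t. F t \<in> Y"
    and prF: "\<And>t. pr (F t) = (c - of_int g * of_int t) / of_int w + of_int (h t)"
    and prZ: "\<And>u v. u - v \<in> Z3 \<Longrightarrow> pr u - pr v \<in> \<int>"
    and fin: "finite (add_coset Kint ` Y)" and "g dvd w"
  shows "nat (\<bar>w\<bar> div g) \<le> card (add_coset Kint ` Y)"
proof (cases "w = 0")
  case False
  define n where "n = \<bar>w\<bar> div g"
  have wn: "\<bar>w\<bar> = g * n" unfolding n_def using \<open>g dvd w\<close> by simp
  have inj: "inj_on (\<lambda>t. add_coset Kint (F t)) {0..<n}"
  proof (rule inj_onI)
    fix t t' assume t: "t \<in> {0..<n}" "t' \<in> {0..<n}"
      and "add_coset Kint (F t) = add_coset Kint (F t')"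
    then have "pr (F t) - pr (F t') \<in> \<int>"
      using prZ Kint_Z3 add_coset_eq_iff[OF add_subgroup_Kint] by blast
    moreover have "(c - of_int g * of_int t) / of_int w - (c - of_int g * of_int t') / of_int w
        = ((c - of_int g * of_int t) - (c - of_int g * of_int t')) / (of_int w :: real)"
      by (rule diff_divide_distrib[symmetric])
    then have "pr (F t) - pr (F t') = of_int (g * (t' - t)) / of_int w + of_int (h t - h t')"
      unfolding prF by (simp add: algebra_simps)
    ultimately have q: "of_int (g * (t' - t)) / (of_int w :: real) \<in> \<int>"
      using Ints_add_iff[of "of_int (h t - h t')"] by (metis Ints_of_int)
    have "\<bar>t' - t\<bar> < n" using t by auto
    then have "\<bar>g * (t' - t)\<bar> < \<bar>w\<bar>" using wn g_pos by (simp add: abs_mult)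
    then have "\<bar>real_of_int (g * (t' - t))\<bar> < \<bar>real_of_int w\<bar>" by linarith
    then have "\<bar>of_int (g * (t' - t)) / (of_int w :: real)\<bar> < 1"
      using False by (simp add: abs_divide)
    then have "of_int (g * (t' - t)) / (of_int w :: real) = 0" using Ints_abs_less_1 q by blast
    then show "t = t'" using False g_pos by simp
  qed
  have "card ((\<lambda>t. add_coset Kint (F t)) ` {0..<n}) \<le> card (add_coset Kint ` Y)"
    using FY by (intro card_mono[OF fin]) auto
  then show ?thesis using card_image[OF inj] unfolding n_def by simp
qed simp

text \<open>Explicit points of the plane on the lines 2 and 3, 1 and 3, 1 and 2 respectively,
  with prescribed level: e is a Bezout vector for (w1, w2, w3).\<close>
definition level_coord :: "int \<Rightarrow> int \<Rightarrow> real" where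
  "level_coord w t = (gam - of_int g * of_int t) / of_int w"

lemma level_points_in_X:
  assumes bezout: "w1 * e1 + w2 * e2 + w3 * e3 = g"
  shows "w1 \<noteq> 0 \<Longrightarrow> (level_coord w1 t + of_int (t * e1), of_int (t * e2), of_int (t * e3)) \<in> X1"
    and "w2 \<noteq> 0 \<Longrightarrow> (of_int (t * e1), level_coord w2 t + of_int (t * e2), of_int (t * e3)) \<in> X2"
    and "w3 \<noteq> 0 \<Longrightarrow> (of_int (t * e1), of_int (t * e2), level_coord w3 t + of_int (t * e3)) \<in> X3"
proof -
  have g: "of_int g = of_int w1 * of_int e1 + of_int w2 * of_int e2 + (of_int w3 * of_int e3 :: real)"
    using bezout by (metis of_int_add of_int_mult)
  have lc: "of_int w * level_coord w t = gam - of_int g * of_int t" if "w \<noteq> 0" for w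
    using that by (simp add: level_coord_def)
  show "w1 \<noteq> 0 \<Longrightarrow> (level_coord w1 t + of_int (t * e1), of_int (t * e2), of_int (t * e3)) \<in> X1"
    by (rule plane_point_in_X(1)) (simp_all add: wd_def lc g algebra_simps)
  show "w2 \<noteq> 0 \<Longrightarrow> (of_int (t * e1), level_coord w2 t + of_int (t * e2), of_int (t * e3)) \<in> X2"
    by (rule plane_point_in_X(2)) (simp_all add: wd_def lc g algebra_simps)
  show "w3 \<noteq> 0 \<Longrightarrow> (of_int (t * e1), of_int (t * e2), level_coord w3 t + of_int (t * e3)) \<in> X3"
    by (rule plane_point_in_X(3)) (simp_all add: wd_def lc g algebra_simps)
qed

lemma X_classes_lower_bounds:
  assumes fin: "finite (add_coset Kint ` vertex_points)"
  shows "nat (\<bar>w1\<bar> div g) \<le> card (add_coset Kint ` X1)"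
    and "nat (\<bar>w2\<bar> div g) \<le> card (add_coset Kint ` X2)"
    and "nat (\<bar>w3\<bar> div g) \<le> card (add_coset Kint ` X3)"
proof -
  obtain e1 e2 e3 where e: "w1 * e1 + w2 * e2 + w3 * e3 = g"
    using gcd3_bezout unfolding g_def by blast
  have fin_X: "finite (add_coset Kint ` X1)" "finite (add_coset Kint ` X2)"
    "finite (add_coset Kint ` X3)"
    using fin unfolding vertex_points_def by (auto simp: image_Un)
  note bound = classes_lower_bound[where c = gam, folded level_coord_def]
  show "nat (\<bar>w1\<bar> div g) \<le> card (add_coset Kint ` X1)"
    by (cases "w1 = 0", simp, rule bound[where pr = fst and h = "\<lambda>t. t * e1"])
       (auto intro: level_points_in_X[OF e] simp: Z3_def fin_X g_dvd)
  show "nat (\<bar>w2\<bar> div g) \<le> card (add_coset Kint ` X2)"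
    by (cases "w2 = 0", simp, rule bound[where pr = "\<lambda>u. fst (snd u)" and h = "\<lambda>t. t * e2"])
       (auto intro: level_points_in_X[OF e] simp: Z3_def fin_X g_dvd)
  show "nat (\<bar>w3\<bar> div g) \<le> card (add_coset Kint ` X3)"
    by (cases "w3 = 0", simp, rule bound[where pr = "\<lambda>u. snd (snd u)" and h = "\<lambda>t. t * e3"])
       (auto intro: level_points_in_X[OF e] simp: Z3_def fin_X g_dvd)
qed

text \<open>Triple points: an integral point of the plane makes gam, hence alpha, integral.\<close>
lemma alpha_Ints_if_triple_point:
  assumes "t \<in> vertex_points" "t \<in> Z3"
  shows "alpha \<in> \<int>"
proof -
  obtain z1 z2 z3 where z: "fst t = of_int z1" "fst (snd t) = of_int z2" "snd (snd t) = of_int z3"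
    using assms(2) unfolding Z3_def by (auto elim!: Ints_cases)
  have "gam = of_int (w1 * z1 + w2 * z2 + w3 * z3)"
    using vertex_points_plane[OF assms(1)] z unfolding wd_def by simp
  moreover have "g dvd w1 * z1 + w2 * z2 + w3 * z3" using g_dvd by simp
  then obtain m where "w1 * z1 + w2 * z2 + w3 * z3 = g * m" by (auto elim: dvdE)
  ultimately have m: "gam = of_int (g * m)" by simp
  have "g dvd pos" using g_dvd unfolding pos_def by (auto simp: max_def)
  then obtain m' where m': "pos = g * m'" by (auto elim: dvdE)
  have "gam - of_int pos = of_int g * of_int (m - m')" unfolding m m' by (simp add: algebra_simps)
  then have "alpha = of_int (m - m')" unfolding alpha_def using g_pos by simp
  then show ?thesis by simp
qed

lemma triple_classes_card:
  "card (add_coset Kint ` (vertex_points \<inter> Z3)) \<le> (if alpha \<in> \<int> then 1 else 0)"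
proof (cases "vertex_points \<inter> Z3 = {}")
  case False
  then obtain t0 where t0: "t0 \<in> vertex_points" "t0 \<in> Z3" by auto
  have "add_coset Kint ` (vertex_points \<inter> Z3) \<subseteq> {add_coset Kint t0}"
  proof
    fix C assume "C \<in> add_coset Kint ` (vertex_points \<inter> Z3)"
    then obtain t where t: "t \<in> vertex_points" "t \<in> Z3" "C = add_coset Kint t" by auto
    have "t - t0 \<in> Kint"
      unfolding Kint_def using Z3_diff[OF t(2) t0(2)] vertex_points_plane t(1) t0(1)
      by (simp add: wd_diff)
    then show "C \<in> {add_coset Kint t0}"
      using t(3) add_coset_eq_iff[OF add_subgroup_Kint] by simp
  qed
  then have "card (add_coset Kint ` (vertex_points \<inter> Z3)) \<le> card {add_coset Kint t0}"
    by (rule card_mono[rotated]) simp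
  then show ?thesis using alpha_Ints_if_triple_point[OF t0] by simp
qed simp

lemma class_overlap_triple_point:
  assumes "x \<in> vertex_points" "add_coset Kint x = add_coset Kint y"
    and "fst x \<in> \<int> \<or> fst y \<in> \<int>" "fst (snd x) \<in> \<int> \<or> fst (snd y) \<in> \<int>"
    "snd (snd x) \<in> \<int> \<or> snd (snd y) \<in> \<int>"
  shows "add_coset Kint x \<in> add_coset Kint ` (vertex_points \<inter> Z3)"
  using same_class_integral_coords[OF assms(2)] assms unfolding Z3_def by blast

lemma vertex_classes_overlap:
  "add_coset Kint ` X1 \<inter> add_coset Kint ` X2 \<subseteq> add_coset Kint ` (vertex_points \<inter> Z3)"
  "add_coset Kint ` X1 \<inter> add_coset Kint ` X3 \<subseteq> add_coset Kint ` (vertex_points \<inter> Z3)"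
  "add_coset Kint ` X2 \<inter> add_coset Kint ` X3 \<subseteq> add_coset Kint ` (vertex_points \<inter> Z3)"
proof -
  have X: "x \<in> X1 \<or> x \<in> X2 \<or> x \<in> X3 \<Longrightarrow> x \<in> vertex_points" for x
    unfolding vertex_points_def by auto
  show "add_coset Kint ` X1 \<inter> add_coset Kint ` X2 \<subseteq> add_coset Kint ` (vertex_points \<inter> Z3)"
  proof (clarify)
    fix x y assume xy: "x \<in> X1" "y \<in> X2" "add_coset Kint x = add_coset Kint y"
    show "add_coset Kint x \<in> add_coset Kint ` (vertex_points \<inter> Z3)"
      by (rule class_overlap_triple_point[OF X xy(3)])
        (use xy X_integral_coords(1)[OF xy(1)] X_integral_coords(2)[OF xy(2)] in auto)
  qed
  show "add_coset Kint ` X1 \<inter> add_coset Kint ` X3 \<subseteq> add_coset Kint ` (vertex_points \<inter> Z3)"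
  proof (clarify)
    fix x y assume xy: "x \<in> X1" "y \<in> X3" "add_coset Kint x = add_coset Kint y"
    show "add_coset Kint x \<in> add_coset Kint ` (vertex_points \<inter> Z3)"
      by (rule class_overlap_triple_point[OF X xy(3)])
        (use xy X_integral_coords(1)[OF xy(1)] X_integral_coords(3)[OF xy(2)] in auto)
  qed
  show "add_coset Kint ` X2 \<inter> add_coset Kint ` X3 \<subseteq> add_coset Kint ` (vertex_points \<inter> Z3)"
  proof (clarify)
    fix x y assume xy: "x \<in> X2" "y \<in> X3" "add_coset Kint x = add_coset Kint y"
    show "add_coset Kint x \<in> add_coset Kint ` (vertex_points \<inter> Z3)"
      by (rule class_overlap_triple_point[OF X xy(3)])
        (use xy X_integral_coords(2)[OF xy(1)] X_integral_coords(3)[OF xy(2)] in auto)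
  qed
qed

text \<open>Summing the lower bounds over the three pairs of lines, corrected for triple points.\<close>
lemma vertex_classes_bound:
  assumes fin: "finite (add_coset Kint ` vertex_points)"
  shows "nat nlevels \<le> card (add_coset Kint ` vertex_points) + (if alpha \<in> \<int> then 2 else 0)"
proof -
  let ?T = "add_coset Kint ` (vertex_points \<inter> Z3)"
  have fin_X: "finite (add_coset Kint ` X1)" "finite (add_coset Kint ` X2)"
    "finite (add_coset Kint ` X3)"
    using fin unfolding vertex_points_def by (auto simp: image_Un)
  have fin_T: "finite ?T" using fin by (rule finite_subset[rotated]) auto
  have "card (add_coset Kint ` X1) + card (add_coset Kint ` X2) + card (add_coset Kint ` X3)
      \<le> card (add_coset Kint ` X1 \<union> add_coset Kint ` X2 \<union> add_coset Kint ` X3) + 2 * card ?T"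
    by (rule card_three_union_bound[OF fin_X fin_T vertex_classes_overlap])
  also have "add_coset Kint ` X1 \<union> add_coset Kint ` X2 \<union> add_coset Kint ` X3
      = add_coset Kint ` vertex_points"
    unfolding vertex_points_def by (simp add: image_Un)
  finally have "nat nlevels \<le> card (add_coset Kint ` vertex_points) + 2 * card ?T"
    using nlevels_split X_classes_lower_bounds[OF fin] by linarith
  moreover have "2 * card ?T \<le> (if alpha \<in> \<int> then 2 else 0)"
    using triple_classes_card by (simp split: if_splits)
  ultimately show ?thesis by linarith
qed

lemma chamber_classes_le:
  assumes "finite (add_coset Kint ` vertex_points)"
  shows "card (add_coset Kint ` chamber_labels) \<le> card (add_coset Kint ` vertex_points) + 1"
  using chamber_classes_bound vertex_classes_bound[OF assms] by (auto split: if_splits)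

section \<open>Back to the torus\<close>

definition on_two_lines :: "real \<times> real \<Rightarrow> bool" where
  "on_two_lines q \<longleftrightarrow>
     (L1 q \<in> \<int> \<and> L2 q \<in> \<int>) \<or> (L1 q \<in> \<int> \<and> L3 q \<in> \<int>) \<or> (L2 q \<in> \<int> \<and> L3 q \<in> \<int>)"
definition torus_vertices :: "(real \<times> real) set" where
  "torus_vertices = {q \<in> torus_space. on_two_lines q}"
definition torus_complement :: "(real \<times> real) set" where
  "torus_complement = {q \<in> torus_space. L1 q \<notin> \<int> \<and> L2 q \<notin> \<int> \<and> L3 q \<notin> \<int>}"

lemma line_eqns:
  "toric_line_eqn a1 b1 c1 = {q \<in> torus_space. L1 q \<in> \<int>}"
  "toric_line_eqn a2 b2 c2 = {q \<in> torus_space. L2 q \<in> \<int>}"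
  "toric_line_eqn a3 b3 c3 = {q \<in> torus_space. L3 q \<in> \<int>}"
  by (simp_all add: toric_line_eqn_def L1_def L2_def L3_def)

lemma arrangement_vertices:
  assumes "toric_line_eqn a1 b1 c1 \<noteq> toric_line_eqn a2 b2 c2"
    "toric_line_eqn a1 b1 c1 \<noteq> toric_line_eqn a3 b3 c3"
    "toric_line_eqn a2 b2 c2 \<noteq> toric_line_eqn a3 b3 c3"
  shows "arr_vertices {toric_line_eqn a1 b1 c1, toric_line_eqn a2 b2 c2, toric_line_eqn a3 b3 c3}
    = torus_vertices"
  unfolding arr_vertices_three[OF assms] unfolding line_eqns torus_vertices_def on_two_lines_def
  by blast

lemma vertex_points_eq: "vertex_points = Lv ` Collect on_two_lines"
proof -
  have "Collect on_two_lines = {p. L2 p \<in> \<int> \<and> L3 p \<in> \<int>} \<union> {p. L1 p \<in> \<int> \<and> L3 p \<in> \<int>}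
      \<union> {p. L1 p \<in> \<int> \<and> L2 p \<in> \<int>}"
    by (auto simp: on_two_lines_def)
  then show ?thesis unfolding vertex_points_def X1_def X2_def X3_def by (simp add: image_Un)
qed

lemma arrangement_complement:
  "torus_space - \<Union>{toric_line_eqn a1 b1 c1, toric_line_eqn a2 b2 c2, toric_line_eqn a3 b3 c3}
    = torus_complement"
  unfolding line_eqns torus_complement_def by auto

lemma torus_map_invariants:
  "(L1 (torus_map p) \<in> \<int>) = (L1 p \<in> \<int>)" "(L2 (torus_map p) \<in> \<int>) = (L2 p \<in> \<int>)"
  "(L3 (torus_map p) \<in> \<int>) = (L3 p \<in> \<int>)"
  "add_coset Lam (Lv (torus_map p)) = add_coset Lam (Lv p)"
  "add_coset Lam (floor3 (Lv (torus_map p))) = add_coset Lam (floor3 (Lv p))"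
proof -
  obtain v where v: "torus_map p = p + v" "Nl v \<in> Lam" "Nl v \<in> Z3"
    by (rule torus_map_as_shift)
  show "(L1 (torus_map p) \<in> \<int>) = (L1 p \<in> \<int>)" "(L2 (torus_map p) \<in> \<int>) = (L2 p \<in> \<int>)"
    "(L3 (torus_map p) \<in> \<int>) = (L3 p \<in> \<int>)"
    unfolding v(1) by (rule L_Ints_shift[OF v(3)])+
  have shifted: "add_coset Lam (u + Nl v) = add_coset Lam u" for u
    using add_coset_eq_iff[OF add_subgroup_Lam] v(2) by simp
  show "add_coset Lam (Lv (torus_map p)) = add_coset Lam (Lv p)"
    unfolding v(1) Lv_add shifted ..
  show "add_coset Lam (floor3 (Lv (torus_map p))) = add_coset Lam (floor3 (Lv p))"
    unfolding v(1) Lv_add floor3_add[OF v(3)] shifted ..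
qed

lemma torus_map_on_two_lines: "on_two_lines (torus_map p) = on_two_lines p"
  by (simp add: on_two_lines_def torus_map_invariants)

text \<open>Vertices correspond bijectively to the Lam-classes of vertex points: injectivity
  because Nl is injective and the square contains one representative mod \<int>^2,
  surjectivity by reducing mod \<int>^2 with the quotient map.\<close>
lemma vertex_count: "card torus_vertices = card (add_coset Lam ` vertex_points)"
proof -
  define f where "f q = add_coset Lam (Lv q)" for q
  have "inj_on f torus_vertices"
  proof (rule inj_onI)
    fix q q' assume q: "q \<in> torus_vertices" "q' \<in> torus_vertices" "f q = f q'"
    then have "Lv q - Lv q' \<in> Lam" unfolding f_def using add_coset_eq_iff[OF add_subgroup_Lam] by simp
    then obtain m n where mn: "Lv q - Lv q' = Nl (of_int m, of_int n)" unfolding Lam_def by auto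
    have "Lv q = Lv (q' + (q - q'))" by simp
    also have "\<dots> = Lv q' + Nl (q - q')" by (rule Lv_add)
    finally have "Nl (q - q') = Nl (of_int m, of_int n)" using mn by (simp add: algebra_simps)
    then have "q - q' = (of_int m, of_int n)" by (rule Nl_inj)
    then have "fst q - fst q' = of_int m" "snd q - snd q' = of_int n" by (auto simp: prod_eq_iff)
    moreover have "q \<in> torus_space" "q' \<in> torus_space" using q unfolding torus_vertices_def by auto
    ultimately show "q = q'" unfolding torus_space_def
      by (metis mem_Times_iff atLeastLessThan_iff prod_eqI unit_interval_diff_int)
  qed
  moreover have "f ` torus_vertices = add_coset Lam ` vertex_points"
  proof
    show "f ` torus_vertices \<subseteq> add_coset Lam ` vertex_points"
      unfolding f_def torus_vertices_def vertex_points_eq by auto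
    show "add_coset Lam ` vertex_points \<subseteq> f ` torus_vertices"
    proof
      fix C assume "C \<in> add_coset Lam ` vertex_points"
      then obtain p where p: "on_two_lines p" "C = f p" unfolding vertex_points_eq f_def by auto
      then have "torus_map p \<in> torus_vertices" "f (torus_map p) = C"
        using torus_map_in[of p] torus_map_on_two_lines[of p] torus_map_invariants(4)[of p]
        unfolding torus_vertices_def f_def by auto
      then show "C \<in> f ` torus_vertices" by blast
    qed
  qed
  ultimately show ?thesis by (metis card_image)
qed

text \<open>The cell of the plane with integer part label k: an open box pulled back along the
  affine map Lv, hence open and convex.\<close>
definition cell :: "real \<times> real \<times> real \<Rightarrow> (real \<times> real) set" where
  "cell k = {p \<in> off_lines. floor3 (Lv p) = k}"

lemma cell_eq_box:
  assumes "k \<in> Z3"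
  shows "cell k = {p. fst k < L1 p \<and> L1 p < fst k + 1} \<inter> {p. fst (snd k) < L2 p \<and> L2 p < fst (snd k) + 1}
                 \<inter> {p. snd (snd k) < L3 p \<and> L3 p < snd (snd k) + 1}"
proof -
  have k: "fst k \<in> \<int>" "fst (snd k) \<in> \<int>" "snd (snd k) \<in> \<int>" using assms unfolding Z3_def by auto
  have "floor3 (Lv p) = k \<longleftrightarrow> (of_int \<lfloor>L1 p\<rfloor> = fst k \<and> of_int \<lfloor>L2 p\<rfloor> = fst (snd k)
      \<and> of_int \<lfloor>L3 p\<rfloor> = snd (snd k))" for p
    by (auto simp: floor3_def Lv_def prod_eq_iff)
  then show ?thesis
    unfolding cell_def off_lines_def using floor_eq_not_Ints_iff[OF k(1)]
      floor_eq_not_Ints_iff[OF k(2)] floor_eq_not_Ints_iff[OF k(3)] by blast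
qed

lemma cell_open: "k \<in> Z3 \<Longrightarrow> open (cell k)"
  unfolding cell_eq_box L1_def L2_def L3_def
  by (intro open_Int open_Collect_conj open_Collect_less continuous_intros)

lemma L_affine:
  assumes "u + v = 1"
  shows "L1 (u *\<^sub>R x + v *\<^sub>R y) = u * L1 x + v * L1 y" "L2 (u *\<^sub>R x + v *\<^sub>R y) = u * L2 x + v * L2 y"
    "L3 (u *\<^sub>R x + v *\<^sub>R y) = u * L3 x + v * L3 y"
proof -
  have "c1 = (u + v) * c1" "c2 = (u + v) * c2" "c3 = (u + v) * c3" using assms by simp_all
  then show "L1 (u *\<^sub>R x + v *\<^sub>R y) = u * L1 x + v * L1 y" "L2 (u *\<^sub>R x + v *\<^sub>R y) = u * L2 x + v * L2 y"
    "L3 (u *\<^sub>R x + v *\<^sub>R y) = u * L3 x + v * L3 y"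
    unfolding L1_def L2_def L3_def by (simp_all add: algebra_simps)
qed

lemma cell_convex: "k \<in> Z3 \<Longrightarrow> convex (cell k)"
  unfolding cell_eq_box using L_affine by (intro convex_Int convex_affine_strip) blast+

definition chamber_class :: "real \<times> real \<Rightarrow> (real \<times> real \<times> real) set" where
  "chamber_class q = add_coset Lam (floor3 (Lv q))"

lemma torus_complement_iff: "torus_map p \<in> torus_complement \<longleftrightarrow> p \<in> off_lines"
  using torus_map_in[of p] torus_map_invariants[of p]
  unfolding torus_complement_def off_lines_def by simp

lemma chamber_class_fibre:
  "{y \<in> torus_complement. chamber_class y = chamber_class x} = torus_map ` cell (floor3 (Lv x))"
proof
  show "torus_map ` cell (floor3 (Lv x)) \<subseteq> {y \<in> torus_complement. chamber_class y = chamber_class x}"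
  proof
    fix y assume "y \<in> torus_map ` cell (floor3 (Lv x))"
    then obtain p where p: "p \<in> off_lines" "floor3 (Lv p) = floor3 (Lv x)" "y = torus_map p"
      unfolding cell_def by auto
    then have "y \<in> torus_complement" using torus_complement_iff by simp
    moreover have "chamber_class y = chamber_class x"
      using p(2,3) torus_map_invariants(5)[of p] unfolding chamber_class_def by simp
    ultimately show "y \<in> {y \<in> torus_complement. chamber_class y = chamber_class x}" by simp
  qed
  show "{y \<in> torus_complement. chamber_class y = chamber_class x} \<subseteq> torus_map ` cell (floor3 (Lv x))"
  proof
    fix y assume y: "y \<in> {y \<in> torus_complement. chamber_class y = chamber_class x}"
    then have "floor3 (Lv y) - floor3 (Lv x) \<in> Lam"
      unfolding chamber_class_def using add_coset_eq_iff[OF add_subgroup_Lam] by simp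
    then obtain m n where mn: "floor3 (Lv y) - floor3 (Lv x) = Nl (of_int m, of_int n)"
      unfolding Lam_def by auto
    define p where "p = y + (of_int (-m), of_int (-n))"
    have nz: "Nl (of_int (-m), of_int (-n)) \<in> Z3" using Nl_int by blast
    have "Nl (of_int (-m), of_int (-n)) = - Nl (of_int m, of_int n)" by (simp add: Nl_def)
    then have "floor3 (Lv p) = floor3 (Lv y) - Nl (of_int m, of_int n)"
      unfolding p_def Lv_add floor3_add[OF nz] by simp
    then have "floor3 (Lv p) = floor3 (Lv x)" using mn by (simp add: algebra_simps)
    moreover have "p \<in> off_lines"
      using y L_Ints_shift[OF nz, of y] unfolding p_def torus_complement_def off_lines_def by simp
    moreover have "0 \<le> fst y" "fst y < 1" "0 \<le> snd y" "snd y < 1"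
      using y unfolding torus_complement_def torus_space_def by auto
    then have "torus_map p = y"
      unfolding p_def torus_map_def by (simp del: of_int_minus add: frac_eq prod_eq_iff)
    ultimately show "y \<in> torus_map ` cell (floor3 (Lv x))" unfolding cell_def by auto
  qed
qed

text \<open>The fibres are open in the complement: their preimages are unions of open cells.\<close>
lemma chamber_class_fibre_open:
  "openin (subtopology torus_top torus_complement)
           {y \<in> torus_complement. chamber_class y = chamber_class x}"
proof -
  let ?F = "{y \<in> torus_complement. chamber_class y = chamber_class x}"
  have pre: "torus_map -` ?F = {p \<in> off_lines. chamber_class p = chamber_class x}"
  proof (rule set_eqI)
    fix p
    show "p \<in> torus_map -` ?F \<longleftrightarrow> p \<in> {p \<in> off_lines. chamber_class p = chamber_class x}"
      using torus_complement_iff[of p] torus_map_invariants(5)[of p]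
      unfolding chamber_class_def by simp
  qed
  have "open {p \<in> off_lines. chamber_class p = chamber_class x}"
  proof (subst open_subopen, intro ballI)
    fix p0 assume p0: "p0 \<in> {p \<in> off_lines. chamber_class p = chamber_class x}"
    have "p0 \<in> cell (floor3 (Lv p0))" using p0 unfolding cell_def by auto
    moreover have "cell (floor3 (Lv p0)) \<subseteq> {p \<in> off_lines. chamber_class p = chamber_class x}"
      using p0 unfolding cell_def chamber_class_def by force
    ultimately show "\<exists>T. open T \<and> p0 \<in> T \<and> T \<subseteq> {p \<in> off_lines. chamber_class p = chamber_class x}"
      using cell_open floor3_Z3 by blast
  qed
  moreover have "?F \<subseteq> torus_space" unfolding torus_complement_def by auto
  ultimately have "openin torus_top ?F" unfolding openin_torus pre by simp
  then show ?thesis unfolding openin_subtopology by (intro exI[of _ ?F]) auto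
qed

lemma chamber_count:
  "card (connected_components_of (subtopology torus_top torus_complement))
     = card (add_coset Lam ` chamber_labels)"
proof -
  have ts: "topspace (subtopology torus_top torus_complement) = torus_complement"
    using topspace_torus unfolding torus_complement_def by auto
  have "card (connected_components_of (subtopology torus_top torus_complement))
      = card (chamber_class ` topspace (subtopology torus_top torus_complement))"
  proof (rule card_components_eq_card_values)
    fix x
    show "openin (subtopology torus_top torus_complement)
        {y \<in> topspace (subtopology torus_top torus_complement). chamber_class y = chamber_class x}"
      unfolding ts by (rule chamber_class_fibre_open)
    have "connected (cell (floor3 (Lv x)))" using cell_convex floor3_Z3 convex_connected by blast
    then have "connectedin torus_top (torus_map ` cell (floor3 (Lv x)))"
      using connectedin_continuous_map_image[OF continuous_map_torus_map] by simp
    moreover have "torus_map ` cell (floor3 (Lv x)) \<subseteq> torus_complement"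
      using chamber_class_fibre[of x] by blast
    ultimately show "connectedin (subtopology torus_top torus_complement)
        {y \<in> topspace (subtopology torus_top torus_complement). chamber_class y = chamber_class x}"
      unfolding ts chamber_class_fibre connectedin_subtopology by simp
  qed
  also have "chamber_class ` topspace (subtopology torus_top torus_complement)
      = add_coset Lam ` chamber_labels"
    unfolding ts
  proof
    show "chamber_class ` torus_complement \<subseteq> add_coset Lam ` chamber_labels"
      unfolding chamber_class_def chamber_labels_def torus_complement_def off_lines_def by auto
    show "add_coset Lam ` chamber_labels \<subseteq> chamber_class ` torus_complement"
    proof
      fix C assume "C \<in> add_coset Lam ` chamber_labels"
      then obtain p where "p \<in> off_lines" "C = chamber_class p"
        unfolding chamber_labels_def chamber_class_def by auto
      then have "torus_map p \<in> torus_complement" "chamber_class (torus_map p) = C"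
        using torus_complement_iff torus_map_invariants(5) unfolding chamber_class_def by auto
      then show "C \<in> chamber_class ` torus_complement" by blast
    qed
  qed
  finally show ?thesis .
qed

text \<open>The counting argument: both counts are [Kint:Lam] times the number of Kint-classes,
  and there is at most one more Kint-class of chambers than of vertices.\<close>
lemma class_count_dvd:
  assumes x_pos: "0 < card (add_coset Lam ` vertex_points)"
    and less: "card (add_coset Lam ` vertex_points) < card (add_coset Lam ` chamber_labels)"
  shows "card (add_coset Lam ` chamber_labels) - card (add_coset Lam ` vertex_points)
           dvd card (add_coset Lam ` vertex_points)"
proof -
  define index where "index = card (add_coset Lam ` Kint)"
  note factor = card_cosets_index[OF add_subgroup_Lam add_subgroup_Kint Lam_subset_Kint]
  have f0: "card (add_coset Lam ` vertex_points) = index * card (add_coset Kint ` vertex_points)"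
    unfolding index_def
    by (rule factor) (use vertex_points_invariant(4) x_pos card_ge_0_finite in auto)
  have f2: "card (add_coset Lam ` chamber_labels) = index * card (add_coset Kint ` chamber_labels)"
    unfolding index_def
    by (rule factor) (use chamber_labels_invariant less card_ge_0_finite[of "add_coset Lam ` chamber_labels"] in auto)
  have "finite (add_coset Kint ` vertex_points)"
    using x_pos f0 by (metis card_ge_0_finite mult_eq_0_iff neq0_conv)
  then have "card (add_coset Kint ` chamber_labels) \<le> card (add_coset Kint ` vertex_points) + 1"
    by (rule chamber_classes_le)
  moreover have "card (add_coset Kint ` vertex_points) < card (add_coset Kint ` chamber_labels)"
    using less f0 f2 by simp
  ultimately have "card (add_coset Kint ` chamber_labels) = card (add_coset Kint ` vertex_points) + 1"
    by linarith
  then have "card (add_coset Lam ` chamber_labels) - card (add_coset Lam ` vertex_points) = index"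
    using f0 f2 by (simp add: algebra_simps)
  then show ?thesis using f0 by simp
qed

end

theorem mainTheorem9:
  fixes A :: "(real \<times> real) set set"
  assumes "toric_arrangement A"
    and "card A = 3"
    and "f0 A < f2 A"
    and "f2 A < 2 * f0 A"
  shows "(f2 A - f0 A) dvd f0 A"
proof -
  obtain a1 b1 a2 b2 a3 b3 :: int and c1 c2 c3 :: real
    where nonparallel: "a1 * b2 - a2 * b1 \<noteq> 0"
      and A: "A = {toric_line_eqn a1 b1 c1, toric_line_eqn a2 b2 c2, toric_line_eqn a3 b3 c3}"
      and distinct: "toric_line_eqn a1 b1 c1 \<noteq> toric_line_eqn a2 b2 c2"
        "toric_line_eqn a1 b1 c1 \<noteq> toric_line_eqn a3 b3 c3"
        "toric_line_eqn a2 b2 c2 \<noteq> toric_line_eqn a3 b3 c3"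
    using three_line_arrangement_coordinates[OF assms(1,2)] by metis
  interpret three_lines a1 b1 a2 b2 a3 b3 c1 c2 c3
    using nonparallel by unfold_locales
  have f0: "f0 A = card (add_coset Lam ` vertex_points)"
    unfolding f0_def A arrangement_vertices[OF distinct] by (rule vertex_count)
  have f2: "f2 A = card (add_coset Lam ` chamber_labels)"
    unfolding f2_def arr_chambers_def A arrangement_complement by (rule chamber_count)
  show ?thesis
    unfolding f0 f2 by (rule class_count_dvd) (use assms(3,4) f0 f2 in auto)
qed

end
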